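(* Let $b,t$ be positive integers and $x_0,\dots,x_{t-1}$ indeterminates. Let $A=(A_0\ A_1\ \cdots\ A_{t-1})$ be the $tb\times tb$ matrix over $\mathbb C[x_0,\dots,x_{t-1}]$ where $A_s$ is the $tb\times b$ matrix whose rows are indexed by $i=(t-1)b-1,(t-1)b-2,\dots,-b$ (top to bottom) and whose columns are indexed by $k=1,\dots,b$, with $(i,k)$ entry $\alpha^k_i(x_s)=\sum_{j=1}^k\binom{x_s}{i+j}\binom{-x_s}{k-j}$. Then $$\det A=\prod_{0\le i<j\le t-1}\ \prod_{k=-b+1}^{b-1}\left(\frac{x_i-x_j+k}{b(j-i)+k}\right)^{b-|k|}.$$
   Context: $\binom{x}{n}=x(x-1)\cdots(x-n+1)/n!$ for integers $n\ge0$ and $\binom xn=0$ for $n<0$. *)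

theory Defs
  imports Complex_Main "Jordan_Normal_Form.Determinant"
begin

definition ibinom :: "complex \<Rightarrow> int \<Rightarrow> complex" where
  "ibinom x n = (if n < 0 then 0 else x gchoose (nat n))"

definition alpha :: "nat \<Rightarrow> int \<Rightarrow> complex \<Rightarrow> complex" where
  "alpha k i x = (\<Sum>j = 1..k. ibinom x (i + int j) * ibinom (- x) (int k - int j))"

text \<open>The tb x tb matrix A = (A_0 ... A_{t-1}), evaluated at x_0..x_{t-1}.
  Row r (0-based) has index i = (t-1)b - 1 - r; column c belongs to block
  s = c div b with k = c mod b + 1.\<close>
definition matA :: "nat \<Rightarrow> nat \<Rightarrow> (nat \<Rightarrow> complex) \<Rightarrow> complex mat" where
  "matA b t x = mat (t * b) (t * b)
     (\<lambda>(r, c). alpha (c mod b + 1) (int ((t - 1) * b) - 1 - int r) (x (c div b)))"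

end

theory Submission
  imports Defs "HOL-Computational_Algebra.Formal_Power_Series"
begin

(*
  Index columns by pairs (s, k) with c = s*b + k.  Writing alpha^{k+1}_i(x) as the
  convolution  sum_{n<=k} C(x, i+1+n) C(-x, k-n)  factors  A = M * P,  where
  M_{r,(s,n)} = C(x_s, (t-1)b - r + n) and P is block diagonal and upper unitriangular.
  Vandermonde's convolution gives  M * Q = B  for a block diagonal lower unitriangular
  integer matrix Q, where B_{r,c} = C(y_c, tb-1-r) at the shifted nodes
  y_{(s,k)} = x_s + (b-1-k).  Hence det A = det B.  The matrix B is the binomial
  Vandermonde matrix (C(y_c, r)) with reversed rows, whose determinant is the Vandermonde
  product of the nodes divided by the superfactorial.  Grouping node pairs by blocks
  shows det A = c * prod_{i<j} H_b(x_i - x_j), with H_b(v) = prod_{|k|<b} (v+k)^{b-|k|}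
  and c independent of x.  Finally, at the base point x_s = b(t-1-s) the nodes are
  tb-1-c, so B is lower unitriangular and det A = 1; this fixes c, and the values of
  H_b at the base point are exactly the denominators of the theorem.
*)

lemma gbinomial_Suc_absorb:
  fixes a :: "'a::field_char_0"
  shows "of_nat (Suc k) * (a gchoose Suc k) = (a - of_nat k) * (a gchoose k)"
  by (simp only: gbinomial_absorption gbinomial_absorb_comp)

text \<open>The elementary row operation that clears the first column of the binomial
  Vandermonde matrix: subtracting a multiple of row i from row i+1.\<close>
lemma gbinomial_elim_step:
  fixes a c :: "'a::field_char_0"
  shows "(a gchoose Suc i) - (c - of_nat i) / of_nat (Suc i) * (a gchoose i)
       = (a - c) / of_nat (Suc i) * (a gchoose i)"
proof -
  have nz: "of_nat (Suc i) \<noteq> (0::'a)" by (rule of_nat_neq_0)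
  have "(a gchoose Suc i) = (a - of_nat i) / of_nat (Suc i) * (a gchoose i)"
    using gbinomial_Suc_absorb[of i a] nz by (simp add: field_simps del: of_nat_Suc)
  then show ?thesis using nz by (simp add: field_simps del: of_nat_Suc)
qed

text \<open>Vandermonde's convolution for the integer-indexed binomial coefficient: it turns
  the block matrix M into the (row reversed) binomial Vandermonde matrix.\<close>
lemma ibinom_choose_convolution:
  assumes "m < b"
  shows "(\<Sum>l<b. ibinom z (int N - int l) * of_nat (m choose l)) = (z + of_nat m) gchoose N"
proof -
  let ?S = "{0..min m N}"
  have "(\<Sum>l<b. ibinom z (int N - int l) * of_nat (m choose l)) =
        (\<Sum>l\<in>?S. ibinom z (int N - int l) * of_nat (m choose l))"
    by (rule sum.mono_neutral_right) (use assms in \<open>auto simp: ibinom_def\<close>)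
  also have "\<dots> = (\<Sum>l\<in>?S. (of_nat m gchoose l) * (z gchoose (N - l)))"
    by (rule sum.cong[OF refl]) (auto simp: ibinom_def binomial_gbinomial nat_diff_distrib)
  also have "\<dots> = (\<Sum>l\<in>{0..N}. (of_nat m gchoose l) * (z gchoose (N - l)))"
    by (rule sum.mono_neutral_left) (auto simp: binomial_gbinomial[symmetric])
  also have "\<dots> = (of_nat m + z) gchoose N"
    by (rule gbinomial_Vandermonde)
  finally show ?thesis by (simp add: add.commute)
qed

lemma prod_lessThan_add: "(\<Prod>c<n+m::nat. f c) = (\<Prod>c<n. f c) * (\<Prod>a<m. f (n+a))"
  by (induction m) (simp_all add: ac_simps)

lemma prod_lessThan_blocks: "(\<Prod>c<t*b::nat. f c) = (\<Prod>s<t. \<Prod>a<b. f (s*b+a))"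
proof -
  have "prod f {s*b..<s*b+b} = (\<Prod>a<b. f (s*b+a))" for s
    using prod.shift_bounds_nat_ivl[of f 0 "s*b" b] by (simp add: atLeast0LessThan add.commute)
  then show ?thesis by (simp flip: prod.nat_group)
qed

lemma sum_lessThan_blocks: "(\<Sum>c<t*b::nat. f c) = (\<Sum>s<t. \<Sum>a<b. f (s*b+a))"
proof -
  have "sum f {s*b..<s*b+b} = (\<Sum>a<b. f (s*b+a))" for s
    using sum.shift_bounds_nat_ivl[of f 0 "s*b" b] by (simp add: atLeast0LessThan add.commute)
  then show ?thesis by (simp flip: sum.nat_group)
qed

lemma le_within_block:
  fixes i j b :: nat
  assumes "i div b = j div b" and "i mod b \<le> j mod b"
  shows "i \<le> j"
  using assms by (metis add_le_cancel_left div_mult_mod_eq)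

lemma sum_block_select:
  fixes h :: "nat \<Rightarrow> 'a::comm_monoid_add"
  assumes "s < t"
  shows "(\<Sum>c<t*b. if c div b = s then h (c mod b) else 0) = (\<Sum>a<b. h a)"
proof (cases "b = 0")
  case False
  have "(\<Sum>c<t*b. if c div b = s then h (c mod b) else 0)
      = (\<Sum>s'<t. if s' = s then (\<Sum>a<b. h a) else 0)"
    by (simp only: sum_lessThan_blocks) (rule sum.cong, use False in auto)
  also have "\<dots> = (\<Sum>a<b. h a)"
    using assms by simp
  finally show ?thesis .
qed simp

text \<open>The factor H_b(v) = prod_{|k|<b} (v+k)^(b-|k|) contributed by a pair of blocks.\<close>
definition pair_factor :: "nat \<Rightarrow> 'a::comm_ring_1 \<Rightarrow> 'a" where
  "pair_factor b v = (\<Prod>k\<in>{-int b+1..int b - 1}. (v + of_int k) ^ nat (int b - \<bar>k\<bar>))"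

text \<open>Passing from b to b+1 offsets adds the differences a' - b (a' < b) and b - a (a <= b),
  which together run once through every k with |k| <= b.\<close>
lemma prod_symmetric_range:
  fixes v :: "'a::comm_ring_1"
  shows "(\<Prod>a'<b. v + of_int (int a' - int b)) * (\<Prod>a<Suc b. v + of_int (int b - int a))
       = (\<Prod>k\<in>{-int b..int b}. v + of_int k)"
proof -
  have "(\<Prod>a'<b. v + of_int (int a' - int b)) = (\<Prod>k\<in>{-int b..<0}. v + of_int k)"
    by (rule prod.reindex_bij_witness[where i="\<lambda>k. nat (k + int b)" and j="\<lambda>a'. int a' - int b"]) auto
  moreover have "(\<Prod>a<Suc b. v + of_int (int b - int a)) = (\<Prod>k\<in>{0..int b}. v + of_int k)"
    by (rule prod.reindex_bij_witness[where i="\<lambda>k. nat (int b - k)" and j="\<lambda>a. int b - int a"]) auto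
  moreover have "{-int b..int b} = {-int b..<0} \<union> {0..int b}" by auto
  ultimately show ?thesis
    by (simp only:) (rule prod.union_disjoint[symmetric], auto)
qed

text \<open>H_b(v) is the product of v + (a' - a) over all pairs of offsets a, a' < b:
  the difference k = a' - a occurs exactly b - |k| times.\<close>
lemma prod_differences_square:
  fixes v :: "'a::comm_ring_1"
  shows "(\<Prod>a'<b. \<Prod>a<b. v + of_int (int a' - int a)) = pair_factor b v"
proof (induction b)
  case 0
  then show ?case by (simp add: pair_factor_def)
next
  case (Suc b)
  let ?f = "\<lambda>k. v + of_int k"
  have "(\<Prod>a'<Suc b. \<Prod>a<Suc b. ?f (int a' - int a)) =
      (\<Prod>a'<b. \<Prod>a<b. ?f (int a' - int a)) * (\<Prod>k\<in>{-int b..int b}. ?f k)"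
    by (simp add: prod.distrib flip: prod_symmetric_range)
  also have "(\<Prod>a'<b. \<Prod>a<b. ?f (int a' - int a))
      = (\<Prod>k\<in>{-int b..int b}. ?f k ^ nat (int b - \<bar>k\<bar>))"
    unfolding Suc.IH pair_factor_def by (rule prod.mono_neutral_left) auto
  also have "\<dots> * (\<Prod>k\<in>{-int b..int b}. ?f k) = (\<Prod>k\<in>{-int b..int b}. ?f k ^ nat (int (Suc b) - \<bar>k\<bar>))"
  proof -
    have "?f k ^ nat (int (Suc b) - \<bar>k\<bar>) = ?f k ^ nat (int b - \<bar>k\<bar>) * ?f k" if "k \<in> {-int b..int b}" for k
    proof -
      from that have "nat (int (Suc b) - \<bar>k\<bar>) = Suc (nat (int b - \<bar>k\<bar>))" by auto
      then show ?thesis by (simp only: power_Suc mult.commute)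
    qed
    then show ?thesis by (simp add: prod.distrib)
  qed
  also have "\<dots> = pair_factor (Suc b) v"
    by (simp add: pair_factor_def)
  finally show ?case .
qed

lemma cross_block_prod:
  fixes u w :: "'a::comm_ring_1"
  shows "(\<Prod>a'<b. \<Prod>a<b. (u + of_nat (b - 1 - a')) - (w + of_nat (b - 1 - a)))
       = (-1)^(b*b) * pair_factor b (w - u)"
proof -
  have "(u + of_nat (b - 1 - a')) - (w + of_nat (b - 1 - a)) = (-1) * ((w - u) + of_int (int a' - int a))"
    if "a' < b" "a < b" for a' a
    using that by (simp add: of_nat_diff algebra_simps)
  then have "(\<Prod>a'<b. \<Prod>a<b. (u + of_nat (b - 1 - a')) - (w + of_nat (b - 1 - a)))
      = (\<Prod>a'<b. \<Prod>a<b. (-1) * ((w - u) + of_int (int a' - int a)))"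
    by (intro prod.cong) auto
  also have "\<dots> = ((-1)^b)^b * (\<Prod>a'<b. \<Prod>a<b. (w - u) + of_int (int a' - int a))"
    by (simp only: prod.distrib prod_constant card_lessThan)
  finally show ?thesis
    by (simp only: prod_differences_square power_mult)
qed

lemma det_scale_rows_cols:
  fixes M :: "'a::comm_ring_1 mat"
  assumes "M \<in> carrier_mat n n"
  shows "det (mat n n (\<lambda>(i,j). a i * b j * M $$ (i,j))) =
    (\<Prod>i<n. a i) * (\<Prod>j<n. b j) * det M"
proof -
  have "det (mat n n (\<lambda>(i,j). a i * b j * M $$ (i,j))) =
     (\<Sum>p\<in>{p. p permutes {0..<n}}. signof p * (\<Prod>i=0..<n. a i * b (p i) * M $$ (i, p i)))"
    by (subst det_def'[of _ n]) auto
  also have "\<dots> = (\<Sum>p\<in>{p. p permutes {0..<n}}.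
      (\<Prod>i<n. a i) * (\<Prod>j<n. b j) * (signof p * (\<Prod>i=0..<n. M $$ (i, p i))))"
  proof (rule sum.cong[OF refl])
    fix p assume "p \<in> {p. p permutes {0..<n}}"
    then have "(\<Prod>i=0..<n. b (p i)) = (\<Prod>j=0..<n. b j)"
      using prod.permute[of p "{0..<n}" b] by (simp add: comp_def)
    then show "signof p * (\<Prod>i=0..<n. a i * b (p i) * M $$ (i, p i)) =
        (\<Prod>i<n. a i) * (\<Prod>j<n. b j) * (signof p * (\<Prod>i=0..<n. M $$ (i, p i)))"
      by (simp add: prod.distrib atLeast0LessThan)
  qed
  also have "\<dots> = (\<Prod>i<n. a i) * (\<Prod>j<n. b j) * det M"
    by (subst det_def'[OF assms]) (simp add: sum_distrib_left)
  finally show ?thesis .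
qed

lemma det_lower_unitriangular:
  assumes "A \<in> carrier_mat n n"
    and "\<And>i j. i < j \<Longrightarrow> j < n \<Longrightarrow> A $$ (i,j) = 0"
    and "\<And>i. i < n \<Longrightarrow> A $$ (i,i) = 1"
  shows "det A = 1"
  using assms by (simp add: det_lower_triangular[of n A] prod_list_diag_prod)

lemma det_upper_unitriangular:
  assumes "A \<in> carrier_mat n n"
    and "\<And>i j. j < i \<Longrightarrow> i < n \<Longrightarrow> A $$ (i,j) = 0"
    and "\<And>i. i < n \<Longrightarrow> A $$ (i,i) = 1"
  shows "det A = 1"
  using assms by (simp add: det_upper_triangular[of A n] upper_triangular_def prod_list_diag_prod)

definition binom_mat :: "nat \<Rightarrow> (nat \<Rightarrow> 'a::field_char_0) \<Rightarrow> 'a mat" where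
  "binom_mat n y = mat n n (\<lambda>(r,c). y c gchoose r)"

definition vandermonde_prod :: "nat \<Rightarrow> (nat \<Rightarrow> 'a::comm_ring_1) \<Rightarrow> 'a" where
  "vandermonde_prod n y = (\<Prod>c'<n. \<Prod>c<c'. (y c' - y c))"

text \<open>Lower unitriangular row operations reduce the first column of the binomial
  Vandermonde matrix on n+1 nodes to a unit vector; the rest of the matrix becomes a
  row and column scaling of the binomial Vandermonde matrix on the first n nodes.\<close>
lemma binom_mat_row_reduction:
  fixes n :: nat and y :: "nat \<Rightarrow> 'a::field_char_0"
  defines "m \<equiv> Suc n"
  shows "mat m m (\<lambda>(i,j). if i = j then 1 else if Suc j = i then - (y n - of_nat j) / of_nat i else 0)
           * binom_mat m y
       = mat m m (\<lambda>(i,c). if i = 0 then 1 else (y c - y n) / of_nat i * (y c gchoose (i - 1)))"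
    (is "?L * _ = ?E")
proof (rule eq_matI)
  fix i c assume "i < dim_row ?E" and "c < dim_col ?E"
  then have i: "i < m" and c: "c < m" by auto
  have "(?L * binom_mat m y) $$ (i,c) = (\<Sum>k<m. ?L $$ (i,k) * (y c gchoose k))"
    using i c by (simp add: binom_mat_def scalar_prod_def atLeast0LessThan)
  also have "\<dots> = ?E $$ (i,c)"
  proof (cases i)
    case 0
    have "(\<Sum>k<m. ?L $$ (i,k) * (y c gchoose k)) = (\<Sum>k<m. if k = 0 then 1 else 0)"
      by (rule sum.cong) (auto simp: 0)
    then show ?thesis using 0 c by (simp add: m_def)
  next
    case (Suc i')
    have "(\<Sum>k<m. ?L $$ (i,k) * (y c gchoose k)) =
          (\<Sum>k<m. (if k = i then y c gchoose i else 0) +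
             (if k = i' then - (y n - of_nat i') / of_nat i * (y c gchoose i') else 0))"
      by (rule sum.cong) (use i Suc in auto)
    also have "\<dots> = (y c gchoose Suc i') - (y n - of_nat i') / of_nat (Suc i') * (y c gchoose i')"
      using i Suc by (simp add: sum.distrib) (simp add: minus_divide_left algebra_simps)
    also have "\<dots> = ?E $$ (i,c)"
      using i c Suc by (simp only: gbinomial_elim_step) simp
    finally show ?thesis .
  qed
  finally show "(?L * binom_mat m y) $$ (i,c) = ?E $$ (i,c)" .
qed (auto simp: binom_mat_def)

text \<open>One induction step for the binomial Vandermonde determinant, by Laplace expansion of
  the reduced matrix along its last column.\<close>
lemma det_binom_mat_Suc:
  fixes y :: "nat \<Rightarrow> 'a::field_char_0"
  shows "det (binom_mat (Suc n) y) = (\<Prod>j<n. y n - y j) / fact n * det (binom_mat n y)"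
proof -
  define m where "m = Suc n"
  define L :: "'a mat" where "L = mat m m (\<lambda>(i,j). if i = j then 1
      else if Suc j = i then - (y n - of_nat j) / of_nat i else 0)"
  define E where "E = mat m m (\<lambda>(i,c). if i = 0 then 1
      else (y c - y n) / of_nat i * (y c gchoose (i - 1)))"
  have carrier: "L \<in> carrier_mat m m" "binom_mat m y \<in> carrier_mat m m" "E \<in> carrier_mat m m"
    by (simp_all add: L_def E_def binom_mat_def)
  have "det L = 1"
    by (rule det_lower_unitriangular[OF carrier(1)]) (auto simp: L_def)
  moreover have "L * binom_mat m y = E"
    unfolding L_def E_def m_def by (rule binom_mat_row_reduction)
  ultimately have "det (binom_mat m y) = det E"
    using det_mult[OF carrier(1,2)] by simp
  also have "det E = (\<Sum>i<m. E $$ (i,n) * cofactor E i n)"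
    by (rule laplace_expansion_column[OF carrier(3)]) (simp add: m_def)
  also have "\<dots> = (\<Sum>i<m. if i = 0 then E $$ (0,n) * cofactor E 0 n else 0)"
    by (rule sum.cong) (auto simp: E_def m_def)
  also have "\<dots> = E $$ (0,n) * cofactor E 0 n"
    by (simp add: m_def)
  also have "\<dots> = (-1)^n * det (mat_delete E 0 n)"
    by (simp add: cofactor_def E_def m_def)
  also have "mat_delete E 0 n
      = mat n n (\<lambda>(i,j). (1 / of_nat (Suc i)) * (y j - y n) * binom_mat n y $$ (i,j))"
    by (rule eq_matI) (auto simp: mat_delete_def E_def binom_mat_def m_def)
  also have "det \<dots> = (\<Prod>i<n. 1 / of_nat (Suc i)) * (\<Prod>j<n. y j - y n) * det (binom_mat n y)"
    by (rule det_scale_rows_cols) (simp add: binom_mat_def)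
  also have "(\<Prod>i<n. 1 / of_nat (Suc i)) = (1 / fact n :: 'a)"
    by (simp add: prod_dividef fact_prod_Suc atLeast0LessThan)
  also have "(\<Prod>j<n. y j - y n) = (\<Prod>j<n. (-1) * (y n - y j))"
    by simp
  also have "\<dots> = (-1)^n * (\<Prod>j<n. y n - y j)"
    by (subst prod.distrib) simp
  finally show ?thesis by (simp add: m_def)
qed

lemma det_binom_mat:
  fixes y :: "nat \<Rightarrow> 'a::field_char_0"
  shows "det (binom_mat n y) = vandermonde_prod n y / (\<Prod>m<n. fact m)"
proof (induction n)
  case 0
  then show ?case by (simp add: binom_mat_def vandermonde_prod_def)
next
  case (Suc n)
  then show ?case
    by (simp add: det_binom_mat_Suc vandermonde_prod_def mult.commute)
qed

definition rev_binom_mat :: "nat \<Rightarrow> (nat \<Rightarrow> 'a::field_char_0) \<Rightarrow> 'a mat" where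
  "rev_binom_mat n y = mat n n (\<lambda>(r,c). y c gchoose (n - 1 - r))"

definition exchange_mat :: "nat \<Rightarrow> 'a::comm_ring_1 mat" where
  "exchange_mat n = mat n n (\<lambda>(r,k). if k = n - 1 - r then 1 else 0)"

lemma rev_binom_mat_eq: "rev_binom_mat n y = exchange_mat n * binom_mat n y"
proof (rule eq_matI)
  fix r c assume "r < dim_row (exchange_mat n * binom_mat n y)"
    and "c < dim_col (exchange_mat n * binom_mat n y)"
  then have r: "r < n" and c: "c < n" by (auto simp: exchange_mat_def binom_mat_def)
  have "(exchange_mat n * binom_mat n y) $$ (r,c)
      = (\<Sum>k<n. (if k = n - 1 - r then 1 else 0) * (y c gchoose k))"
    using r c by (simp add: exchange_mat_def binom_mat_def scalar_prod_def atLeast0LessThan)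
  also have "\<dots> = (\<Sum>k<n. if k = n - 1 - r then y c gchoose k else 0)"
    by (rule sum.cong) auto
  also have "\<dots> = rev_binom_mat n y $$ (r,c)"
    using r c by (simp add: rev_binom_mat_def)
  finally show "rev_binom_mat n y $$ (r,c) = (exchange_mat n * binom_mat n y) $$ (r,c)" ..
qed (auto simp: rev_binom_mat_def exchange_mat_def binom_mat_def)

lemma det_rev_binom_mat:
  "det (rev_binom_mat n y) = det (exchange_mat n) * (vandermonde_prod n y / (\<Prod>m<n. fact m))"
proof -
  have "exchange_mat n \<in> carrier_mat n n" "binom_mat n y \<in> carrier_mat n n"
    by (simp_all add: exchange_mat_def binom_mat_def)
  from det_mult[OF this] show ?thesis by (simp add: rev_binom_mat_eq det_binom_mat)
qed

definition shifted_nodes :: "nat \<Rightarrow> (nat \<Rightarrow> 'a::comm_ring_1) \<Rightarrow> nat \<Rightarrow> 'a" where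
  "shifted_nodes b x c = x (c div b) + of_nat (b - 1 - c mod b)"

lemma shifted_nodes_block:
  "a < b \<Longrightarrow> shifted_nodes b x (s*b + a) = x s + of_nat (b - 1 - a)"
  by (simp add: shifted_nodes_def)

lemma vandermonde_prod_add:
  "vandermonde_prod (n + m) y = vandermonde_prod n y * (\<Prod>a<m. \<Prod>c<n+a. y (n+a) - y c)"
  unfolding vandermonde_prod_def by (rule prod_lessThan_add)

lemma vandermonde_shifted_nodes:
  fixes x :: "nat \<Rightarrow> 'a::comm_ring_1"
  shows "vandermonde_prod (t*b) (shifted_nodes b x)
       = vandermonde_prod b (\<lambda>a. of_nat (b - 1 - a)) ^ t
         * (\<Prod>j<t. \<Prod>i<j. (-1)^(b*b) * pair_factor b (x i - x j))"
proof (induction t)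
  case 0
  then show ?case by (simp add: vandermonde_prod_def)
next
  case (Suc t)
  let ?y = "shifted_nodes b x"
  have cross: "(\<Prod>a'<b. \<Prod>c<t*b. ?y (t*b + a') - ?y c)
      = (\<Prod>s<t. (-1)^(b*b) * pair_factor b (x s - x t))"
  proof -
    have "(\<Prod>a'<b. \<Prod>c<t*b. ?y (t*b + a') - ?y c)
        = (\<Prod>s<t. \<Prod>a'<b. \<Prod>a<b. ?y (t*b + a') - ?y (s*b + a))"
      unfolding prod_lessThan_blocks by (rule prod.swap)
    also have "\<dots> = (\<Prod>s<t. \<Prod>a'<b. \<Prod>a<b. (x t + of_nat (b - 1 - a')) - (x s + of_nat (b - 1 - a)))"
      by (intro prod.cong refl) (simp add: shifted_nodes_block)
    finally show ?thesis by (simp only: cross_block_prod)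
  qed
  have within: "(\<Prod>a'<b. \<Prod>a<a'. ?y (t*b + a') - ?y (t*b + a))
      = vandermonde_prod b (\<lambda>a. of_nat (b - 1 - a))"
    unfolding vandermonde_prod_def by (intro prod.cong refl) (simp add: shifted_nodes_block)
  have "vandermonde_prod (Suc t * b) ?y
      = vandermonde_prod (t*b) ?y * (\<Prod>a'<b. \<Prod>c<t*b + a'. ?y (t*b + a') - ?y c)"
    by (simp only: mult_Suc add.commute[of b "t*b"] vandermonde_prod_add)
  also have "\<dots> = vandermonde_prod (t*b) ?y * ((\<Prod>a'<b. \<Prod>c<t*b. ?y (t*b + a') - ?y c)
      * (\<Prod>a'<b. \<Prod>a<a'. ?y (t*b + a') - ?y (t*b + a)))"
    by (simp only: prod_lessThan_add prod.distrib)
  also have "\<dots> = vandermonde_prod (t*b) ?y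
      * ((\<Prod>s<t. (-1)^(b*b) * pair_factor b (x s - x t)) * vandermonde_prod b (\<lambda>a. of_nat (b - 1 - a)))"
    by (simp only: cross within)
  also have "\<dots> = vandermonde_prod b (\<lambda>a. of_nat (b - 1 - a)) ^ Suc t
      * (\<Prod>j<Suc t. \<Prod>i<j. (-1)^(b*b) * pair_factor b (x i - x j))"
    by (simp only: Suc.IH prod.lessThan_Suc power_Suc) (simp only: mult_ac)
  finally show ?case .
qed

text \<open>The factors of A = M * P and B = M * Q.\<close>
definition binom_block_mat :: "nat \<Rightarrow> nat \<Rightarrow> (nat \<Rightarrow> complex) \<Rightarrow> complex mat" where
  "binom_block_mat b t x = mat (t*b) (t*b)
     (\<lambda>(r,c). ibinom (x (c div b)) (int ((t-1)*b) - int r + int (c mod b)))"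

definition neg_binom_mat :: "nat \<Rightarrow> nat \<Rightarrow> (nat \<Rightarrow> complex) \<Rightarrow> complex mat" where
  "neg_binom_mat b t x = mat (t*b) (t*b) (\<lambda>(c',c).
     if c' div b = c div b \<and> c' mod b \<le> c mod b
     then ibinom (- x (c div b)) (int (c mod b) - int (c' mod b)) else 0)"

definition choose_block_mat :: "nat \<Rightarrow> nat \<Rightarrow> complex mat" where
  "choose_block_mat b t = mat (t*b) (t*b) (\<lambda>(c',c).
     if c' div b = c div b then of_nat ((b - 1 - c mod b) choose (b - 1 - c' mod b)) else 0)"

text \<open>A = M * P: the entry alpha^{k+1}_i(x_s) of A is the convolution of column (s,n) of M
  with the entries C(-x_s, k-n), n <= k, of P.\<close>
lemma matA_factorization:
  assumes b: "b > 0"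
  shows "matA b t x = binom_block_mat b t x * neg_binom_mat b t x"
proof (rule eq_matI)
  fix r c assume "r < dim_row (binom_block_mat b t x * neg_binom_mat b t x)"
    and "c < dim_col (binom_block_mat b t x * neg_binom_mat b t x)"
  then have r: "r < t*b" and c: "c < t*b"
    by (auto simp: binom_block_mat_def neg_binom_mat_def)
  define s where "s = c div b"
  define k where "k = c mod b"
  have s: "s < t" using c b by (simp add: s_def less_mult_imp_div_less)
  have k: "k < b" using b by (simp add: k_def)
  define g where "g n = ibinom (x s) (int ((t-1)*b) - int r + int n) * ibinom (- x s) (int k - int n)" for n
  have "(binom_block_mat b t x * neg_binom_mat b t x) $$ (r,c)
      = (\<Sum>c'<t*b. binom_block_mat b t x $$ (r,c') * neg_binom_mat b t x $$ (c',c))"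
    using r c by (simp add: binom_block_mat_def neg_binom_mat_def scalar_prod_def atLeast0LessThan)
  also have "\<dots> = (\<Sum>c'<t*b. if c' div b = s then (if c' mod b \<le> k then g (c' mod b) else 0) else 0)"
    by (rule sum.cong[OF refl])
       (use r c in \<open>auto simp: binom_block_mat_def neg_binom_mat_def g_def s_def k_def\<close>)
  also have "\<dots> = (\<Sum>n<b. if n \<le> k then g n else 0)"
    by (rule sum_block_select[OF s])
  also have "\<dots> = (\<Sum>n\<in>{0..k}. g n)"
  proof -
    have "{n. n < b \<and> n \<le> k} = {0..k}" using k by auto
    then show ?thesis by (simp add: sum.If_cases Int_def)
  qed
  also have "\<dots> = alpha (k + 1) (int ((t - 1) * b) - 1 - int r) (x s)"
  proof -
    have e: "{1..k+1} = {Suc 0..Suc k}" by simp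
    show ?thesis unfolding alpha_def
      by (simp only: e sum.shift_bounds_cl_Suc_ivl) (rule sum.cong, simp_all add: g_def algebra_simps)
  qed
  also have "\<dots> = matA b t x $$ (r,c)"
    using r c by (simp add: matA_def s_def k_def)
  finally show "matA b t x $$ (r,c) = (binom_block_mat b t x * neg_binom_mat b t x) $$ (r,c)" ..
qed (auto simp: matA_def binom_block_mat_def neg_binom_mat_def)

text \<open>B = M * Q: reindexing n -> b-1-n turns each entry of M * Q into a Vandermonde
  convolution, which sums to C(x_s + b-1-k, tb-1-r).\<close>
lemma rev_binom_mat_factorization:
  assumes b: "b > 0"
  shows "rev_binom_mat (t*b) (shifted_nodes b x) = binom_block_mat b t x * choose_block_mat b t"
proof (rule eq_matI)
  fix r c assume "r < dim_row (binom_block_mat b t x * choose_block_mat b t)"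
    and "c < dim_col (binom_block_mat b t x * choose_block_mat b t)"
  then have r: "r < t*b" and c: "c < t*b"
    by (auto simp: binom_block_mat_def choose_block_mat_def)
  define s where "s = c div b"
  define k where "k = c mod b"
  have s: "s < t" using c b by (simp add: s_def less_mult_imp_div_less)
  have k: "k < b" using b by (simp add: k_def)
  define g where "g n = ibinom (x s) (int ((t-1)*b) - int r + int n)
      * of_nat ((b - 1 - k) choose (b - 1 - n))" for n
  have "(binom_block_mat b t x * choose_block_mat b t) $$ (r,c)
      = (\<Sum>c'<t*b. binom_block_mat b t x $$ (r,c') * choose_block_mat b t $$ (c',c))"
    using r c by (simp add: binom_block_mat_def choose_block_mat_def scalar_prod_def atLeast0LessThan)
  also have "\<dots> = (\<Sum>c'<t*b. if c' div b = s then g (c' mod b) else 0)"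
    by (rule sum.cong[OF refl])
       (use r c in \<open>auto simp: binom_block_mat_def choose_block_mat_def g_def s_def k_def\<close>)
  also have "\<dots> = (\<Sum>n<b. g n)"
    by (rule sum_block_select[OF s])
  also have "\<dots> = (\<Sum>l<b. ibinom (x s) (int (t*b - 1 - r) - int l) * of_nat ((b - 1 - k) choose l))"
  proof (rule sum.reindex_bij_witness[where i="\<lambda>l. b - 1 - l" and j="\<lambda>n. b - 1 - n"])
    fix l assume l: "l \<in> {..<b}"
    have "(t-1)*b = t*b - b" and "b \<le> t*b"
      using s by (simp_all add: diff_mult_distrib)
    then have "int ((t-1)*b) - int r + int l = int (t*b - 1 - r) - int (b - 1 - l)"
      using r l by (simp add: of_nat_diff)
    then show "ibinom (x s) (int (t*b - 1 - r) - int (b - 1 - l))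
        * of_nat ((b - 1 - k) choose (b - 1 - l)) = g l"
      unfolding g_def by (simp only:)
  qed auto
  also have "\<dots> = (x s + of_nat (b - 1 - k)) gchoose (t*b - 1 - r)"
    by (rule ibinom_choose_convolution) (use b in simp)
  also have "\<dots> = rev_binom_mat (t*b) (shifted_nodes b x) $$ (r,c)"
    using r c by (simp add: rev_binom_mat_def shifted_nodes_def s_def k_def)
  finally show "rev_binom_mat (t*b) (shifted_nodes b x) $$ (r,c)
      = (binom_block_mat b t x * choose_block_mat b t) $$ (r,c)" ..
qed (auto simp: rev_binom_mat_def binom_block_mat_def choose_block_mat_def)

lemma det_neg_binom_mat: "det (neg_binom_mat b t x) = 1"
proof (rule det_upper_unitriangular[of _ "t*b"])
  fix i j assume "j < i" "i < t*b"
  then show "neg_binom_mat b t x $$ (i,j) = 0"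
    using le_within_block[of i b j] by (auto simp: neg_binom_mat_def)
qed (simp_all add: neg_binom_mat_def ibinom_def)

lemma det_choose_block_mat: "det (choose_block_mat b t) = 1"
proof (rule det_lower_unitriangular[of _ "t*b"])
  fix i j assume ij: "i < j" "j < t*b"
  show "choose_block_mat b t $$ (i,j) = 0"
  proof (cases "i div b = j div b")
    case True
    then have "i mod b < j mod b" using le_within_block[of j b i] ij by linarith
    moreover have "j mod b < b" using ij by (cases b) auto
    ultimately have "b - 1 - j mod b < b - 1 - i mod b" by linarith
    then show ?thesis using ij True by (simp add: choose_block_mat_def)
  qed (use ij in \<open>simp add: choose_block_mat_def\<close>)
qed (simp_all add: choose_block_mat_def)

lemma det_matA_eq_det_rev_binom:
  assumes "b > 0"
  shows "det (matA b t x) = det (rev_binom_mat (t*b) (shifted_nodes b x))"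
proof -
  have carrier: "binom_block_mat b t x \<in> carrier_mat (t*b) (t*b)"
    "neg_binom_mat b t x \<in> carrier_mat (t*b) (t*b)" "choose_block_mat b t \<in> carrier_mat (t*b) (t*b)"
    by (simp_all add: binom_block_mat_def neg_binom_mat_def choose_block_mat_def)
  show ?thesis
    using matA_factorization[OF assms] rev_binom_mat_factorization[OF assms]
      det_mult[OF carrier(1,2)] det_mult[OF carrier(1,3)] det_neg_binom_mat det_choose_block_mat
    by simp
qed

lemma det_matA_proportional:
  assumes "b > 0"
  obtains c where "\<And>x. det (matA b t x) = c * (\<Prod>j<t. \<Prod>i<j. pair_factor b (x i - x j))"
proof
  fix x :: "nat \<Rightarrow> complex"
  have "(\<Prod>j<t. \<Prod>i<j. (-1)^(b*b) * pair_factor b (x i - x j))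
      = (\<Prod>j<t. \<Prod>i<j. (-1)^(b*b)) * (\<Prod>j<t. \<Prod>i<j. pair_factor b (x i - x j))"
    by (simp only: prod.distrib)
  then show "det (matA b t x) = det (exchange_mat (t*b)) / (\<Prod>m<t*b. fact m)
      * (vandermonde_prod b (\<lambda>a. of_nat (b - 1 - a)) ^ t * (\<Prod>j<t. \<Prod>i<j. (-1)^(b*b)))
      * (\<Prod>j<t. \<Prod>i<j. pair_factor b (x i - x j))"
    unfolding det_matA_eq_det_rev_binom[OF assms] det_rev_binom_mat vandermonde_shifted_nodes
    by (simp add: ac_simps)
qed

definition base_point :: "nat \<Rightarrow> nat \<Rightarrow> nat \<Rightarrow> complex" where
  "base_point b t s = of_nat (b * (t - 1 - s))"

lemma shifted_nodes_base_point:
  assumes "c < t*b"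
  shows "shifted_nodes b (base_point b t) c = of_nat (t*b - 1 - c)"
proof -
  define q m where "q = c div b" and "m = c mod b"
  obtain d where d: "t = Suc (q + d)"
    using assms less_mult_imp_div_less less_iff_Suc_add unfolding q_def by metis
  have "b > 0" using assms by (cases b) auto
  then have m: "m < b" and cm: "c = q*b + m"
    by (simp_all add: q_def m_def)
  have "t - 1 - q = d" using d by simp
  moreover have "t*b - 1 - c = d*b + (b - 1 - m)"
    using m d cm by (simp add: algebra_simps)
  ultimately show ?thesis
    unfolding shifted_nodes_def base_point_def q_def[symmetric] m_def[symmetric]
    by (simp add: mult.commute)
qed

text \<open>At the base point the reversed binomial Vandermonde matrix is lower unitriangular.\<close>
lemma det_matA_base_point:
  assumes "b > 0"
  shows "det (matA b t (base_point b t)) = 1"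
proof -
  let ?B = "rev_binom_mat (t*b) (shifted_nodes b (base_point b t))"
  have entry: "?B $$ (i,j) = of_nat ((t*b - 1 - j) choose (t*b - 1 - i))"
    if "i < t*b" "j < t*b" for i j
  proof -
    have "?B $$ (i,j) = shifted_nodes b (base_point b t) j gchoose (t*b - 1 - i)"
      using that by (simp add: rev_binom_mat_def)
    then show ?thesis
      by (simp only: shifted_nodes_base_point[OF that(2)] binomial_gbinomial)
  qed
  have "det ?B = 1"
    by (rule det_lower_unitriangular[of _ "t*b"]) (simp_all add: entry, simp add: rev_binom_mat_def)
  then show ?thesis
    by (simp only: det_matA_eq_det_rev_binom[OF assms])
qed

lemma base_point_difference:
  assumes "i < j" "j < t"
  shows "base_point b t i - base_point b t j + of_int k = of_int (int b * (int j - int i) + k)"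
proof -
  have "int (b * (t - 1 - i)) = int b * (int t - 1 - int i)"
    and "int (b * (t - 1 - j)) = int b * (int t - 1 - int j)"
    using assms by (simp_all add: of_nat_diff)
  then have "int (b * (t - 1 - i)) - int (b * (t - 1 - j)) + k = int b * (int j - int i) + k"
    by (simp add: algebra_simps)
  then have "of_int (int (b * (t - 1 - i)) - int (b * (t - 1 - j)) + k)
      = (of_int (int b * (int j - int i) + k) :: complex)"
    by (rule arg_cong)
  then show ?thesis
    unfolding base_point_def by simp
qed

lemma normalized_pair_product:
  "(\<Prod>j\<in>{..<t}. \<Prod>i\<in>{..<j}. \<Prod>k\<in>{-int b + 1..int b - 1}.
       ((x i - x j + of_int k) / of_int (int b * (int j - int i) + k)) ^ nat (int b - \<bar>k\<bar>))
   = (\<Prod>j<t. \<Prod>i<j. pair_factor b (x i - x j))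
     / (\<Prod>j<t. \<Prod>i<j. pair_factor b (base_point b t i - base_point b t j))"
proof -
  have "((x i - x j + of_int k) / of_int (int b * (int j - int i) + k)) ^ nat (int b - \<bar>k\<bar>)
      = (x i - x j + of_int k) ^ nat (int b - \<bar>k\<bar>)
        / (base_point b t i - base_point b t j + of_int k) ^ nat (int b - \<bar>k\<bar>)"
    if "j < t" "i < j" for i j k
    using that by (simp only: base_point_difference power_divide)
  then show ?thesis
    unfolding pair_factor_def prod_dividef[symmetric] by (intro prod.cong refl) auto
qed

theorem mainTheorem7:
  fixes b t :: nat and x :: "nat \<Rightarrow> complex"
  assumes "b > 0" and "t > 0"
  shows "det (matA b t x) =
    (\<Prod>j\<in>{..<t}. \<Prod>i\<in>{..<j}. \<Prod>k\<in>{-int b + 1..int b - 1}.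
       ((x i - x j + of_int k) / of_int (int b * (int j - int i) + k)) ^ nat (int b - \<bar>k\<bar>))"
proof -
  let ?F = "\<lambda>y. \<Prod>j<t. \<Prod>i<j. pair_factor b (y i - y j :: complex)"
  obtain c where c: "\<And>y. det (matA b t y) = c * ?F y"
    using det_matA_proportional[OF assms(1)] by blast
  have one: "c * ?F (base_point b t) = 1"
    using c det_matA_base_point[OF assms(1)] by metis
  then have "?F (base_point b t) \<noteq> 0" by (metis mult_zero_right zero_neq_one)
  then have "det (matA b t x) = c * ?F (base_point b t) * ?F x / ?F (base_point b t)"
    by (simp add: c)
  then have "det (matA b t x) = ?F x / ?F (base_point b t)"
    by (simp only: one mult_1)
  then show ?thesis
    by (simp only: normalized_pair_product)
qed

end
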